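(* Let $G$ be a finite nonabelian group such that $\{w(G): d\ge1,\ w\in F_d\}=\{\{1\},Z(G),G\}$, i.e. the only word images of $G$ are $\{1\}$, $Z(G)$ and $G$. Then $G$ is a special $p$-group for some prime $p$.
   Context: $F_d$ is the free group on $d$ letters; for $w\in F_d$, $w(G)$ is the image of the word map $G^d\to G$ given by evaluating $w$. A special $p$-group is a finite $p$-group whose center, derived subgroup and Frattini subgroup coincide and are elementary abelian. *)

theory Defs
  imports "HOL-Algebra.Algebra"
begin

text \<open>Words in the free group on letters indexed by naturals: a word is a list of
  letters (i, e), where e = True means the inverse of generator i.
  An element of the free group F_d is represented by (any) word in letters i < d.\<close>

definition letters_below :: "nat \<Rightarrow> (nat \<times> bool) list \<Rightarrow> bool" where
  "letters_below d w \<longleftrightarrow> (\<forall>x\<in>set w. fst x < d)"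

fun word_eval :: "('a, 'b) monoid_scheme \<Rightarrow> (nat \<times> bool) list \<Rightarrow> (nat \<Rightarrow> 'a) \<Rightarrow> 'a" where
  "word_eval G [] g = \<one>\<^bsub>G\<^esub>"
| "word_eval G ((i, e) # w) g =
     (if e then inv\<^bsub>G\<^esub> (g i) else g i) \<otimes>\<^bsub>G\<^esub> word_eval G w g"

definition word_image :: "('a, 'b) monoid_scheme \<Rightarrow> nat \<Rightarrow> (nat \<times> bool) list \<Rightarrow> 'a set" where
  "word_image G d w = {word_eval G w g | g. \<forall>i<d. g i \<in> carrier G}"

definition word_images :: "('a, 'b) monoid_scheme \<Rightarrow> 'a set set" where
  "word_images G = {word_image G d w | d w. 1 \<le> d \<and> letters_below d w}"

definition center :: "('a, 'b) monoid_scheme \<Rightarrow> 'a set" where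
  "center G = {z \<in> carrier G. \<forall>x\<in>carrier G. z \<otimes>\<^bsub>G\<^esub> x = x \<otimes>\<^bsub>G\<^esub> z}"

definition maximal_subgroup :: "('a, 'b) monoid_scheme \<Rightarrow> 'a set \<Rightarrow> bool" where
  "maximal_subgroup G H \<longleftrightarrow> subgroup H G \<and> H \<noteq> carrier G \<and>
     (\<forall>K. subgroup K G \<and> H \<subseteq> K \<longrightarrow> K = H \<or> K = carrier G)"

text \<open>Frattini subgroup: intersection of all maximal subgroups (G itself if there are none).\<close>
definition frattini :: "('a, 'b) monoid_scheme \<Rightarrow> 'a set" where
  "frattini G = carrier G \<inter> \<Inter>{H. maximal_subgroup G H}"

definition elementary_abelian_p :: "('a, 'b) monoid_scheme \<Rightarrow> nat \<Rightarrow> 'a set \<Rightarrow> bool" where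
  "elementary_abelian_p G p H \<longleftrightarrow> subgroup H G \<and> comm_group (G\<lparr>carrier := H\<rparr>) \<and>
     (\<forall>x\<in>H. x [^]\<^bsub>G\<^esub> p = \<one>\<^bsub>G\<^esub>)"

definition p_group :: "('a, 'b) monoid_scheme \<Rightarrow> nat \<Rightarrow> bool" where
  "p_group G p \<longleftrightarrow> group G \<and> finite (carrier G) \<and> (\<exists>n. card (carrier G) = p ^ n)"

definition special_p_group :: "('a, 'b) monoid_scheme \<Rightarrow> nat \<Rightarrow> bool" where
  "special_p_group G p \<longleftrightarrow> Factorial_Ring.prime p \<and> p_group G p \<and>
     center G = derived G (carrier G) \<and> derived G (carrier G) = frattini G \<and>
     elementary_abelian_p G p (center G)"

end

theory Submission
  imports Defs "HOL-Computational_Algebra.Primes"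
begin

text \<open>For a prime q dividing |G| the q-th power map is not surjective (Cauchy), so its image, a word
  image, is 1 or Z(G): all q-th powers are central. Two distinct such primes would make every element
  central, hence G is a p-group. A maximal proper subgroup of a p-group is normalized by an element
  outside it, so it contains G'; thus G' \<noteq> G, and G' \<noteq> 1 as G is nonabelian, so G' = Z(G).
  As a^p is central, [a, b]^p = [a^p, b] = 1, so Z(G) is elementary abelian. Finally Z(G) lies in
  every maximal subgroup K (otherwise G = K Z(G) and G' \<subseteq> K), while G/Z(G) is elementary abelian,
  so each x \<notin> Z(G) is avoided by some maximal subgroup; hence \<Phi>(G) = Z(G).\<close>

lemma prime_power_if_unique_prime_divisor:
  fixes n p :: nat
  assumes "n \<noteq> 0" "Factorial_Ring.prime p" "\<And>q. Factorial_Ring.prime q \<Longrightarrow> q dvd n \<Longrightarrow> q = p"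
  shows "\<exists>k. n = p ^ k"
proof -
  obtain y where y: "n = p ^ multiplicity p n * y" "\<not> p dvd y"
    by (rule multiplicity_decompose'[where x = n and p = p]) (use assms not_prime_unit in auto)
  have "y = 1"
  proof (rule ccontr)
    assume "y \<noteq> 1"
    then obtain q :: nat where "Factorial_Ring.prime q" "q dvd y" using prime_factor_nat by blast
    then show False using assms(3) y by (metis dvd_mult)
  qed
  then show ?thesis using y by auto
qed

section \<open>Fixed points of p-group actions\<close>

lemma group_action_restrict:
  fixes G (structure)
  assumes "group_action G E \<phi>" "E' \<subseteq> E"
    and inv: "\<And>g x. g \<in> carrier G \<Longrightarrow> x \<in> E' \<Longrightarrow> \<phi> g x \<in> E'"
  shows "group_action G E' (\<lambda>g. restrict (\<phi> g) E')"
proof -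
  interpret A: group_action G E \<phi> by fact
  have grp: "group G" using A.group_hom group_hom.axioms(1) by blast
  interpret group G by (rule grp)
  have bij: "restrict (\<phi> g) E' \<in> Bij E'" if g: "g \<in> carrier G" for g
  proof -
    have inj: "inj_on (\<phi> g) E'" using A.inj_prop[OF g] assms(2) inj_on_subset by blast
    have "\<phi> g ` E' = E'"
    proof
      show "\<phi> g ` E' \<subseteq> E'" using inv g by blast
      show "E' \<subseteq> \<phi> g ` E'"
      proof
        fix y assume y: "y \<in> E'"
        have "\<phi> g (\<phi> (inv g) y) = \<phi> (g \<otimes> inv g) y"
          using A.composition_rule[of y g "inv g"] y g assms(2) by auto
        also have "\<dots> = y" using g y assms(2) A.id_eq_one[symmetric]
          by (metis r_inv restrict_apply' subsetD)
        finally show "y \<in> \<phi> g ` E'" using inv y g by (metis image_eqI inv_closed)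
      qed
    qed
    then show ?thesis using inj by (simp add: Bij_def bij_betw_def)
  qed
  have "(\<lambda>g. restrict (\<phi> g) E') \<in> hom G (BijGroup E')"
  proof (rule homI)
    show "restrict (\<phi> g) E' \<in> carrier (BijGroup E')" if "g \<in> carrier G" for g
      using bij[OF that] by (simp add: BijGroup_def)
    show "restrict (\<phi> (g \<otimes> h)) E' = restrict (\<phi> g) E' \<otimes>\<^bsub>BijGroup E'\<^esub> restrict (\<phi> h) E'"
      if g: "g \<in> carrier G" and h: "h \<in> carrier G" for g h
    proof -
      have "restrict (\<phi> g) E' \<otimes>\<^bsub>BijGroup E'\<^esub> restrict (\<phi> h) E'
           = compose E' (restrict (\<phi> g) E') (restrict (\<phi> h) E')"
        using bij[OF g] bij[OF h] by (simp add: BijGroup_def)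
      also have "\<dots> = restrict (\<phi> (g \<otimes> h)) E'"
        unfolding compose_def
        using A.composition_rule g h assms(2) inv by (auto intro!: restrict_ext)
      finally show ?thesis by simp
    qed
  qed
  then show ?thesis
    unfolding group_action_def group_hom_def group_hom_axioms_def
    using grp group_BijGroup by blast
qed

context group_action
begin

lemma card_orbit_dvd_order: "x \<in> E \<Longrightarrow> card (orbit G \<phi> x) dvd order G"
  using orbit_stabilizer_theorem by (metis dvd_triv_left)

lemma orbit_eq_singleton_iff:
  assumes "x \<in> E"
  shows "orbit G \<phi> x = {x} \<longleftrightarrow> (\<forall>g\<in>carrier G. \<phi> g x = x)"
proof -
  have "\<one>\<^bsub>G\<^esub> \<in> carrier G"
    using group_hom group_hom.axioms(1) monoid.one_closed group.is_monoid by blast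
  then show ?thesis unfolding orbit_def using assms by (auto; metis)
qed

lemma card_singleton_orbits:
  "card {orb \<in> orbits G E \<phi>. card orb = 1} = card {x \<in> E. \<forall>g\<in>carrier G. \<phi> g x = x}"
proof -
  let ?F = "{x \<in> E. \<forall>g\<in>carrier G. \<phi> g x = x}"
  have "orbit G \<phi> ` ?F = {orb \<in> orbits G E \<phi>. card orb = 1}"
  proof
    show "orbit G \<phi> ` ?F \<subseteq> {orb \<in> orbits G E \<phi>. card orb = 1}"
    proof
      fix orb assume "orb \<in> orbit G \<phi> ` ?F"
      then obtain x where x: "x \<in> ?F" "orb = orbit G \<phi> x" by blast
      then have "orb = {x}" using orbit_eq_singleton_iff by simp
      then show "orb \<in> {orb \<in> orbits G E \<phi>. card orb = 1}" using x unfolding orbits_def by auto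
    qed
    show "{orb \<in> orbits G E \<phi>. card orb = 1} \<subseteq> orbit G \<phi> ` ?F"
    proof
      fix orb assume "orb \<in> {orb \<in> orbits G E \<phi>. card orb = 1}"
      then obtain x where x: "x \<in> E" "orb = orbit G \<phi> x" "card orb = 1"
        unfolding orbits_def by blast
      then have "orb = {x}" using orbit_refl by (metis card_1_singletonE singletonD)
      then show "orb \<in> orbit G \<phi> ` ?F" using orbit_eq_singleton_iff x by auto
    qed
  qed
  moreover have "inj_on (orbit G \<phi>) ?F"
  proof (rule inj_onI)
    fix x y assume x: "x \<in> ?F" and y: "y \<in> ?F" and "orbit G \<phi> x = orbit G \<phi> y"
    moreover have "orbit G \<phi> x = {x}" "orbit G \<phi> y = {y}"
      using x y orbit_eq_singleton_iff by auto
    ultimately show "x = y" by simp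
  qed
  ultimately show ?thesis using card_image by fastforce
qed

text \<open>Orbits of a p-group have p-power size, so modulo p only the fixed points count.\<close>

lemma card_mod_prime_eq_card_fixed_points:
  assumes fin: "finite E" and p: "Factorial_Ring.prime p" and cardG: "order G = p ^ n"
  shows "card E mod p = card {x \<in> E. \<forall>g\<in>carrier G. \<phi> g x = x} mod p"
proof -
  have finO: "finite (orbits G E \<phi>)" unfolding orbits_def using fin by simp
  have orb_mod: "card orb mod p = (if card orb = 1 then 1 else 0)" if orb: "orb \<in> orbits G E \<phi>" for orb
  proof -
    obtain x where "x \<in> E" "orb = orbit G \<phi> x" using orb unfolding orbits_def by blast
    then have "card orb dvd p ^ n" using card_orbit_dvd_order cardG by simp
    then obtain k where "card orb = p ^ k" using divides_primepow_nat[OF p] by blast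
    then show ?thesis using prime_gt_1_nat[OF p] by (cases k) simp_all
  qed
  have "card E = (\<Sum>orb\<in>orbits G E \<phi>. card orb)"
    using disjoint_sum[OF fin, of "\<lambda>_. 1::nat"] by simp
  then have "card E mod p = (\<Sum>orb\<in>orbits G E \<phi>. card orb mod p) mod p"
    by (simp add: mod_sum_eq)
  also have "(\<Sum>orb\<in>orbits G E \<phi>. card orb mod p) = card {orb \<in> orbits G E \<phi>. card orb = 1}"
    using finO by (simp add: orb_mod sum.If_cases Int_def)
  finally show ?thesis using card_singleton_orbits by simp
qed

end

section \<open>Subgroups of finite groups and p-groups\<close>

definition adjoin_powers :: "('a, 'b) monoid_scheme \<Rightarrow> 'a set \<Rightarrow> 'a \<Rightarrow> 'a set" where
  "adjoin_powers G H g = {h \<otimes>\<^bsub>G\<^esub> g [^]\<^bsub>G\<^esub> (i::nat) | h i. h \<in> H}"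

context group
begin

lemma finite_subgroupI:
  assumes fin: "finite (carrier G)" and S: "S \<subseteq> carrier G" "\<one> \<in> S"
    and m_closed: "\<And>x y. x \<in> S \<Longrightarrow> y \<in> S \<Longrightarrow> x \<otimes> y \<in> S"
  shows "subgroup S G"
proof (rule subgroupI)
  show "S \<subseteq> carrier G" "S \<noteq> {}" using S by auto
  show "a \<otimes> b \<in> S" if "a \<in> S" "b \<in> S" for a b using m_closed that .
  show "inv a \<in> S" if a: "a \<in> S" for a
  proof -
    have ac: "a \<in> carrier G" using a S by auto
    have pow_in: "a [^] (n::nat) \<in> S" for n by (induction n) (simp_all add: S a m_closed)
    have "a [^] (ord a - 1) \<otimes> a = a [^] ord a"
      using ord_ge_1[OF fin ac] ac by (simp flip: nat_pow_Suc)
    then have "inv a = a [^] (ord a - 1)" using ac by (simp add: inv_equality)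
    then show ?thesis using pow_in by simp
  qed
qed

lemma subgroup_pow_closed:
  assumes "subgroup H G" "x \<in> H" shows "x [^] (n::nat) \<in> H"
  using assms by (induction n) (auto intro: subgroup.one_closed subgroup.m_closed)

lemma inv_mult_cancel_left: "a \<in> carrier G \<Longrightarrow> b \<in> carrier G \<Longrightarrow> inv a \<otimes> (a \<otimes> b) = b"
  by (simp add: m_assoc[symmetric])

lemma mult_inv_cancel_left: "a \<in> carrier G \<Longrightarrow> b \<in> carrier G \<Longrightarrow> a \<otimes> (inv a \<otimes> b) = b"
  by (simp add: m_assoc[symmetric])

lemma commutator_eq_mult_inv:
  "a \<in> carrier G \<Longrightarrow> b \<in> carrier G \<Longrightarrow> a \<otimes> b \<otimes> inv a \<otimes> inv b = (a \<otimes> b) \<otimes> inv (b \<otimes> a)"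
  by (simp add: inv_mult_group m_assoc)

lemma commutator_eq_one_iff:
  assumes "a \<in> carrier G" "b \<in> carrier G"
  shows "a \<otimes> b \<otimes> inv a \<otimes> inv b = \<one> \<longleftrightarrow> a \<otimes> b = b \<otimes> a"
  using commutator_eq_mult_inv[OF assms] inv_solve_right'[of \<one> "a \<otimes> b" "b \<otimes> a"] assms by simp

lemma mult_inv_mult_cancel_right:
  "u \<in> carrier G \<Longrightarrow> v \<in> carrier G \<Longrightarrow> w \<in> carrier G \<Longrightarrow> (u \<otimes> w) \<otimes> inv (v \<otimes> w) = u \<otimes> inv v"
  by (simp add: inv_mult_group m_assoc mult_inv_cancel_left)

lemma conj_pow_mem_if_normalizes:
  assumes H: "subgroup H G" and g: "g \<in> carrier G" and norm: "\<forall>y\<in>H. g \<otimes> y \<otimes> inv g \<in> H"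
    and y: "y \<in> H"
  shows "g [^] (i::nat) \<otimes> y \<otimes> inv (g [^] i) \<in> H"
  using y
proof (induction i arbitrary: y)
  case 0
  then show ?case using subgroup.mem_carrier[OF H] by simp
next
  case (Suc i)
  have y: "y \<in> carrier G" using Suc.prems subgroup.mem_carrier[OF H] by simp
  have "g [^] Suc i \<otimes> y \<otimes> inv (g [^] Suc i) = (g \<otimes> g [^] i) \<otimes> y \<otimes> inv (g \<otimes> g [^] i)"
    by (simp only: nat_pow_Suc2[OF g])
  also have "\<dots> = g \<otimes> (g [^] i \<otimes> y \<otimes> inv (g [^] i)) \<otimes> inv g"
    using g y by (simp add: inv_mult_group m_assoc)
  finally show ?case using norm Suc.IH[OF Suc.prems] by simp
qed

lemma mult_pow_mult_pow:
  assumes "h \<in> carrier G" "h' \<in> carrier G" "g \<in> carrier G"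
  shows "(h \<otimes> g [^] (i::nat)) \<otimes> (h' \<otimes> g [^] (j::nat))
       = (h \<otimes> (g [^] i \<otimes> h' \<otimes> inv (g [^] i))) \<otimes> g [^] (i + j)"
  using assms by (simp add: nat_pow_mult[symmetric] m_assoc inv_mult_cancel_left)

lemma subgroup_adjoin_powers:
  assumes fin: "finite (carrier G)" and H: "subgroup H G" and g: "g \<in> carrier G"
    and norm: "\<forall>y\<in>H. g \<otimes> y \<otimes> inv g \<in> H"
  shows "subgroup (adjoin_powers G H g) G"
proof (rule finite_subgroupI[OF fin])
  show "adjoin_powers G H g \<subseteq> carrier G"
    unfolding adjoin_powers_def using g subgroup.mem_carrier[OF H] by auto
  show "\<one> \<in> adjoin_powers G H g"
    unfolding adjoin_powers_def using subgroup.one_closed[OF H]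
    by (intro CollectI exI[of _ \<one>] exI[of _ 0]) simp
  fix x y assume "x \<in> adjoin_powers G H g" "y \<in> adjoin_powers G H g"
  then obtain h i h' j where x: "x = h \<otimes> g [^] (i::nat)" "h \<in> H"
    and y: "y = h' \<otimes> g [^] (j::nat)" "h' \<in> H"
    unfolding adjoin_powers_def by blast
  have "h \<otimes> (g [^] i \<otimes> h' \<otimes> inv (g [^] i)) \<in> H"
    using subgroup.m_closed[OF H x(2) conj_pow_mem_if_normalizes[OF H g norm y(2)]] .
  then show "x \<otimes> y \<in> adjoin_powers G H g"
    unfolding adjoin_powers_def using mult_pow_mult_pow x y g subgroup.mem_carrier[OF H] by blast
qed

lemma subset_adjoin_powers:
  assumes "subgroup H G" "g \<in> carrier G"
  shows "H \<subseteq> adjoin_powers G H g" and "g \<in> adjoin_powers G H g"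
proof -
  show "H \<subseteq> adjoin_powers G H g"
  proof
    fix h assume h: "h \<in> H"
    then have "h = h \<otimes> g [^] (0::nat)" using subgroup.mem_carrier[OF assms(1)] by simp
    then show "h \<in> adjoin_powers G H g" unfolding adjoin_powers_def using h by blast
  qed
  show "g \<in> adjoin_powers G H g"
    unfolding adjoin_powers_def using subgroup.one_closed[OF assms(1)] assms(2)
    by (intro CollectI exI[of _ \<one>] exI[of _ 1]) simp
qed

text \<open>Modulo H, all elements of H g^* are powers of g, and powers of g commute.\<close>

lemma commutator_mem_if_adjoin_powers_eq_carrier:
  assumes H: "subgroup H G" and g: "g \<in> carrier G" and norm: "\<forall>y\<in>H. g \<otimes> y \<otimes> inv g \<in> H"
    and HgG: "adjoin_powers G H g = carrier G"
    and a: "a \<in> carrier G" and b: "b \<in> carrier G"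
  shows "a \<otimes> b \<otimes> inv a \<otimes> inv b \<in> H"
proof -
  obtain h i where ha: "a = h \<otimes> g [^] (i::nat)" "h \<in> H"
    using a HgG unfolding adjoin_powers_def by blast
  obtain h' j where hb: "b = h' \<otimes> g [^] (j::nat)" "h' \<in> H"
    using b HgG unfolding adjoin_powers_def by blast
  have hc: "h \<in> carrier G" "h' \<in> carrier G" using ha hb subgroup.mem_carrier[OF H] by auto
  define u where "u = h \<otimes> (g [^] i \<otimes> h' \<otimes> inv (g [^] i))"
  define v where "v = h' \<otimes> (g [^] j \<otimes> h \<otimes> inv (g [^] j))"
  have uv: "u \<in> H" "v \<in> H"
    unfolding u_def v_def using conj_pow_mem_if_normalizes[OF H g norm] ha hb
    by (auto intro: subgroup.m_closed[OF H])
  have "a \<otimes> b = u \<otimes> g [^] (i + j)" "b \<otimes> a = v \<otimes> g [^] (i + j)"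
    unfolding u_def v_def using mult_pow_mult_pow hc ha hb g by (simp_all add: add.commute)
  then have "a \<otimes> b \<otimes> inv a \<otimes> inv b = u \<otimes> inv v"
    using commutator_eq_mult_inv[OF a b] mult_inv_mult_cancel_right uv subgroup.mem_carrier[OF H] g
    by simp
  then show ?thesis using uv subgroup.m_closed[OF H] subgroup.m_inv_closed[OF H] by metis
qed

lemma ex_maximal_subgroup_with:
  assumes fin: "finite (carrier G)" and "subgroup H G" "P H"
  obtains K where "subgroup K G" "P K" "\<And>L. subgroup L G \<Longrightarrow> P L \<Longrightarrow> K \<subseteq> L \<Longrightarrow> L = K"
proof -
  define Q where "Q = (\<lambda>k. \<exists>K. subgroup K G \<and> P K \<and> card K = k)"
  have "Q (card H)" unfolding Q_def using assms by blast
  moreover have "\<forall>k. Q k \<longrightarrow> k \<le> card (carrier G)"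
    unfolding Q_def using fin card_mono subgroup.subset by blast
  ultimately have "\<exists>k. Q k \<and> (\<forall>k'. Q k' \<longrightarrow> k' \<le> k)"
    by (rule Nat.ex_has_greatest_nat)
  then obtain k where k: "Q k" "\<forall>k'. Q k' \<longrightarrow> k' \<le> k" by blast
  then obtain K where K: "subgroup K G" "P K" "card K = k" unfolding Q_def by blast
  have "L = K" if "subgroup L G" "P L" "K \<subseteq> L" for L
  proof -
    have "Q (card L)" unfolding Q_def using that(1,2) by blast
    then have "card L \<le> card K" using k(2) K(3) by simp
    then show ?thesis
      using card_seteq[OF finite_subset[OF subgroup.subset[OF that(1)] fin] that(3)] by simp
  qed
  then show thesis using that K by blast
qed

lemma conj_rcos:
  assumes H: "subgroup H G" and h: "h \<in> H" and g: "g \<in> carrier G"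
  shows "(h <# (H #> g)) #> inv h = H #> (g \<otimes> inv h)"
proof -
  have hc: "h \<in> carrier G" using subgroup.mem_carrier[OF H h] .
  have Hc: "H \<subseteq> carrier G" using subgroup.subset[OF H] .
  have "h <# (H #> g) = (h <# H) #> g" using coset_assoc hc g Hc by blast
  also have "h <# H = H" using coset_join3 hc H h by blast
  finally show ?thesis using coset_mult_assoc Hc g hc by simp
qed

lemma group_action_conj_rcosets:
  assumes H: "subgroup H G"
  shows "group_action (G\<lparr>carrier := H\<rparr>) (rcosets H) (\<lambda>h. restrict (\<lambda>S. (h <# S) #> inv h) (rcosets H))"
proof -
  let ?\<phi> = "\<lambda>h. restrict (\<lambda>S. (h <# S) #> inv h) {S. S \<subseteq> carrier G}"
  have act: "group_action (G\<lparr>carrier := H\<rparr>) {S. S \<subseteq> carrier G} ?\<phi>"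
    using group_action.induced_action[OF action_by_conjugation_on_power_set H] .
  have sub: "rcosets H \<subseteq> {S. S \<subseteq> carrier G}" using rcosets_subset_PowG[OF H] by auto
  have "?\<phi> h T \<in> rcosets H" if h: "h \<in> carrier (G\<lparr>carrier := H\<rparr>)" and T: "T \<in> rcosets H" for h T
  proof -
    obtain g where g: "g \<in> carrier G" "T = H #> g" using T unfolding RCOSETS_def by blast
    have "h \<in> H" "inv h \<in> carrier G" using h subgroup.mem_carrier[OF H] by auto
    then show ?thesis
      using conj_rcos[OF H _ g(1)] g sub T unfolding RCOSETS_def by (auto simp: subsetD)
  qed
  then have "group_action (G\<lparr>carrier := H\<rparr>) (rcosets H) (\<lambda>h. restrict (?\<phi> h) (rcosets H))"
    by (rule group_action_restrict[OF act sub])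
  moreover have "restrict (?\<phi> h) (rcosets H) = restrict (\<lambda>S. (h <# S) #> inv h) (rcosets H)" for h
    using sub by (intro ext) (auto simp: restrict_def)
  ultimately show ?thesis by simp
qed

lemma normalizes_if_conj_rcos_fixed:
  assumes H: "subgroup H G" and g: "g \<in> carrier G"
    and fixed: "\<forall>h\<in>H. (h <# (H #> g)) #> inv h = H #> g"
  shows "\<forall>y\<in>H. g \<otimes> y \<otimes> inv g \<in> H"
proof
  fix y assume y: "y \<in> H"
  have yc: "y \<in> carrier G" using subgroup.mem_carrier[OF H y] .
  have "H #> (g \<otimes> y) = H #> g"
    using fixed conj_rcos[OF H _ g] subgroup.m_inv_closed[OF H y] y yc by fastforce
  moreover have "g \<otimes> y \<in> H #> (g \<otimes> y)" using rcos_self H g yc by simp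
  ultimately obtain k where k: "k \<in> H" "g \<otimes> y = k \<otimes> g" unfolding r_coset_def by blast
  then have "g \<otimes> y \<otimes> inv g = k" using g subgroup.mem_carrier[OF H] by (simp add: m_assoc)
  then show "g \<otimes> y \<otimes> inv g \<in> H" using k by simp
qed

lemma ex_normalizing_elem_outside_subgroup:
  assumes fin: "finite (carrier G)" and p: "Factorial_Ring.prime p"
    and cardG: "order G = p ^ n" and H: "subgroup H G" and proper: "H \<noteq> carrier G"
  obtains g where "g \<in> carrier G" "g \<notin> H" "\<forall>y\<in>H. g \<otimes> y \<otimes> inv g \<in> H"
proof -
  let ?\<phi> = "\<lambda>h. restrict (\<lambda>S. (h <# S) #> inv h) (rcosets H)"
  let ?F = "{T\<in>rcosets H. \<forall>h\<in>H. ?\<phi> h T = T}"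
  have Hc: "H \<subseteq> carrier G" using subgroup.subset[OF H] .
  have finR: "finite (rcosets H)" using finite_subset[OF rcosets_subset_PowG[OF H]] fin by simp
  have lag: "card (rcosets H) * card H = p ^ n" using lagrange[OF H] cardG by simp
  then obtain m where m: "card H = p ^ m" using p by (metis divides_primepow_nat dvd_triv_right)
  obtain j where j: "card (rcosets H) = p ^ j"
    using lag p by (metis divides_primepow_nat dvd_triv_left)
  have "j \<noteq> 0"
  proof
    assume "j = 0"
    then have "card H = card (carrier G)" using lag j cardG by (simp add: order_def)
    then show False using proper Hc fin card_subset_eq by blast
  qed
  then have Fmod: "card ?F mod p = 0"
    using group_action.card_mod_prime_eq_card_fixed_points[OF group_action_conj_rcosets[OF H] finR p,
        where n = m] m j by (simp add: order_def)
  have HF: "H \<in> ?F"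
  proof -
    have "(h <# H) #> inv h = H" if "h \<in> H" for h
      using coset_join3[OF _ H that] coset_join2[OF _ H subgroup.m_inv_closed[OF H that]]
        subgroup.mem_carrier[OF H that] by simp
    then show ?thesis using subgroup.subgroup_in_rcosets[OF H is_group] by simp
  qed
  have "?F \<noteq> {H}"
  proof
    assume "?F = {H}"
    then have "card ?F = 1" by (metis is_singletonI is_singleton_altdef)
    then have "1 mod p = 0" using Fmod by metis
    then show False using prime_gt_1_nat[OF p] by simp
  qed
  then obtain T where T: "T \<in> ?F" "T \<noteq> H" using HF by blast
  then obtain g where g: "g \<in> carrier G" "T = H #> g" unfolding RCOSETS_def by blast
  have "g \<notin> H" using T(2) g coset_join2[OF g(1) H] by blast
  moreover have "\<forall>h\<in>H. (h <# (H #> g)) #> inv h = H #> g" using T g by auto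
  ultimately show thesis using that g normalizes_if_conj_rcos_fixed[OF H g(1)] by blast
qed

text \<open>A maximal proper subgroup M is normalized by some g \<notin> M, so G = M g^* and G/M is cyclic.\<close>

lemma p_group_commutators_in_proper_subgroup:
  assumes fin: "finite (carrier G)" and p: "Factorial_Ring.prime p"
    and cardG: "order G = p ^ n" and nontriv: "carrier G \<noteq> {\<one>}"
  obtains M where "subgroup M G" "M \<noteq> carrier G"
    "\<And>a b. a \<in> carrier G \<Longrightarrow> b \<in> carrier G \<Longrightarrow> a \<otimes> b \<otimes> inv a \<otimes> inv b \<in> M"
proof -
  obtain M where M: "subgroup M G" "M \<noteq> carrier G"
    and max: "\<And>L. subgroup L G \<Longrightarrow> L \<noteq> carrier G \<Longrightarrow> M \<subseteq> L \<Longrightarrow> L = M"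
    by (rule ex_maximal_subgroup_with[OF fin triv_subgroup, where P = "\<lambda>K. K \<noteq> carrier G",
          OF nontriv[symmetric]]) blast
  obtain g where g: "g \<in> carrier G" "g \<notin> M" and norm: "\<forall>y\<in>M. g \<otimes> y \<otimes> inv g \<in> M"
    using ex_normalizing_elem_outside_subgroup[OF fin p cardG M] by blast
  have "adjoin_powers G M g = carrier G"
  proof (rule ccontr)
    assume "adjoin_powers G M g \<noteq> carrier G"
    then have "adjoin_powers G M g = M"
      using max[OF subgroup_adjoin_powers[OF fin M(1) g(1) norm] _ subset_adjoin_powers(1)[OF M(1) g(1)]]
      by simp
    then show False using subset_adjoin_powers(2)[OF M(1) g(1)] g(2) by simp
  qed
  then show thesis
    by (rule that[OF M commutator_mem_if_adjoin_powers_eq_carrier[OF M(1) g(1) norm]])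
qed

section \<open>Centre, commutators and maximal subgroups\<close>

lemma center_commute: "z \<in> center G \<Longrightarrow> x \<in> carrier G \<Longrightarrow> z \<otimes> x = x \<otimes> z"
  unfolding center_def by auto

lemma subgroup_center: "subgroup (center G) G"
proof (rule subgroupI)
  show "center G \<subseteq> carrier G" "center G \<noteq> {}" unfolding center_def by auto
  show "inv a \<in> center G" if a: "a \<in> center G" for a
  proof -
    have ac: "a \<in> carrier G" using a unfolding center_def by auto
    have "inv a \<otimes> x = x \<otimes> inv a" if x: "x \<in> carrier G" for x
    proof -
      have "inv a \<otimes> x = inv a \<otimes> (x \<otimes> a) \<otimes> inv a" using ac x by (simp add: m_assoc)
      also have "x \<otimes> a = a \<otimes> x" using center_commute[OF a x] by simp
      also have "inv a \<otimes> (a \<otimes> x) \<otimes> inv a = x \<otimes> inv a" using ac x by (simp add: inv_mult_cancel_left)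
      finally show ?thesis .
    qed
    then show ?thesis unfolding center_def using ac by auto
  qed
  show "a \<otimes> b \<in> center G" if a: "a \<in> center G" and b: "b \<in> center G" for a b
  proof -
    have ac: "a \<in> carrier G" "b \<in> carrier G" using a b unfolding center_def by auto
    have "a \<otimes> b \<otimes> x = x \<otimes> (a \<otimes> b)" if x: "x \<in> carrier G" for x
    proof -
      have "a \<otimes> b \<otimes> x = a \<otimes> (b \<otimes> x)" using ac x by (simp add: m_assoc)
      also have "\<dots> = (a \<otimes> x) \<otimes> b" using center_commute[OF b x] ac x by (simp add: m_assoc)
      also have "\<dots> = (x \<otimes> a) \<otimes> b" using center_commute[OF a x] by simp
      also have "\<dots> = x \<otimes> (a \<otimes> b)" using ac x by (simp add: m_assoc)
      finally show ?thesis .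
    qed
    then show ?thesis unfolding center_def using ac by auto
  qed
qed

lemma conj_mem_if_derived_set_subset:
  assumes "derived_set G (carrier G) \<subseteq> K" "subgroup K G" "a \<in> carrier G" "u \<in> K"
  shows "a \<otimes> u \<otimes> inv a \<in> K"
proof -
  have uc: "u \<in> carrier G" using subgroup.mem_carrier[OF assms(2,4)] .
  have "a \<otimes> u \<otimes> inv a \<otimes> inv u \<in> K" using assms(1,3) uc by blast
  moreover have "a \<otimes> u \<otimes> inv a = (a \<otimes> u \<otimes> inv a \<otimes> inv u) \<otimes> u" using assms(3) uc by (simp add: m_assoc)
  ultimately show ?thesis using subgroup.m_closed[OF assms(2) _ assms(4)] by metis
qed

lemma ex_elem_of_prime_order:
  assumes fin: "finite (carrier G)" and q: "Factorial_Ring.prime q" and dvd: "q dvd order G"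
  obtains x where "x \<in> carrier G" "x \<noteq> \<one>" "x [^] q = \<one>"
proof -
  obtain m where m: "order G = q ^ 1 * m" using dvd by auto
  obtain P where P: "subgroup P G" "card P = q" using sylow_thm[OF q is_group m fin] by auto
  then have "P \<noteq> {\<one>}" using prime_gt_1_nat[OF q] by auto
  then obtain y where y: "y \<in> P" "y \<noteq> \<one>" using subgroup.one_closed[OF P(1)] by blast
  interpret P: group "G\<lparr>carrier := P\<rparr>" using subgroup_imp_group[OF P(1)] .
  have "y [^]\<^bsub>G\<lparr>carrier := P\<rparr>\<^esub> order (G\<lparr>carrier := P\<rparr>) = \<one>"
    using P.pow_order_eq_1 y by simp
  then have "y [^] q = \<one>" using P by (simp add: order_def nat_pow_consistent[symmetric])
  then show thesis using that y subgroup.mem_carrier[OF P(1)] by blast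
qed

text \<open>A power map with nontrivial kernel is not injective, hence not surjective.\<close>

lemma pow_image_ne_carrier:
  assumes fin: "finite (carrier G)" and q: "Factorial_Ring.prime q" and dvd: "q dvd order G"
  shows "{x [^] q | x. x \<in> carrier G} \<noteq> carrier G"
proof
  assume "{x [^] q | x. x \<in> carrier G} = carrier G"
  then have "(\<lambda>x. x [^] q) ` carrier G = carrier G" by blast
  then have inj: "inj_on (\<lambda>x. x [^] q) (carrier G)" using fin by (simp add: eq_card_imp_inj_on)
  obtain x where "x \<in> carrier G" "x \<noteq> \<one>" "x [^] q = \<one>"
    using ex_elem_of_prime_order[OF fin q dvd] .
  then show False using inj_onD[OF inj, of x \<one>] by simp
qed

lemma mem_subgroup_if_coprime_pows:
  fixes a b :: nat
  assumes L: "subgroup L G" and y: "y \<in> carrier G" and cop: "coprime a b" and a: "a \<noteq> 0"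
    and ya: "y [^] a \<in> L" and yb: "y [^] b \<in> L"
  shows "y \<in> L"
proof -
  obtain s t where "a * s = b * t + gcd a b" using bezout_nat[OF a] by blast
  then have st: "a * s = b * t + 1" using cop by simp
  have A: "y [^] (a * s) \<in> L" using subgroup_pow_closed[OF L ya, of s] y by (simp add: nat_pow_pow)
  have B: "y [^] (b * t) \<in> L" using subgroup_pow_closed[OF L yb, of t] y by (simp add: nat_pow_pow)
  have "y = inv (y [^] (b * t)) \<otimes> y [^] (a * s)"
    using st y by (simp add: nat_pow_mult[symmetric] inv_mult_cancel_left)
  then show ?thesis using A B subgroup.m_closed[OF L] subgroup.m_inv_closed[OF L] by metis
qed

lemma comm_group_if_coprime_pows_central:
  fixes p q :: nat
  assumes "coprime p q" "p \<noteq> 0"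
    and "\<And>x. x \<in> carrier G \<Longrightarrow> x [^] p \<in> center G" "\<And>x. x \<in> carrier G \<Longrightarrow> x [^] q \<in> center G"
  shows "comm_group G"
proof (rule group_comm_groupI)
  fix x y assume "x \<in> carrier G" "y \<in> carrier G"
  then show "x \<otimes> y = y \<otimes> x"
    using mem_subgroup_if_coprime_pows[OF subgroup_center _ assms(1,2)] assms(3,4) center_commute by blast
qed

lemma conj_pow_eq_commutator_pow:
  assumes a: "a \<in> carrier G" and b: "b \<in> carrier G"
    and central: "a \<otimes> b \<otimes> inv a \<otimes> inv b \<in> center G"
  shows "a [^] (n::nat) \<otimes> b \<otimes> inv (a [^] n) = (a \<otimes> b \<otimes> inv a \<otimes> inv b) [^] n \<otimes> b"
proof (induction n)
  case 0
  then show ?case using b by simp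
next
  case (Suc n)
  define c where "c = a \<otimes> b \<otimes> inv a \<otimes> inv b"
  have cc: "c \<in> carrier G" using a b unfolding c_def by simp
  have cn: "c [^] n \<in> center G" using subgroup_pow_closed[OF subgroup_center central] unfolding c_def .
  have "a [^] Suc n \<otimes> b \<otimes> inv (a [^] Suc n) = (a \<otimes> a [^] n) \<otimes> b \<otimes> inv (a \<otimes> a [^] n)"
    by (simp only: nat_pow_Suc2[OF a])
  also have "\<dots> = a \<otimes> (a [^] n \<otimes> b \<otimes> inv (a [^] n)) \<otimes> inv a"
    using a b by (simp add: inv_mult_group m_assoc)
  also have "\<dots> = (a \<otimes> c [^] n) \<otimes> b \<otimes> inv a" using Suc a b cc unfolding c_def by (simp add: m_assoc)
  also have "\<dots> = (c [^] n \<otimes> a) \<otimes> b \<otimes> inv a" using center_commute[OF cn a] by simp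
  also have "\<dots> = c [^] n \<otimes> (a \<otimes> b \<otimes> inv a)" using a b cc by (simp add: m_assoc)
  also have "a \<otimes> b \<otimes> inv a = c \<otimes> b" using a b unfolding c_def by (simp add: m_assoc)
  also have "c [^] n \<otimes> (c \<otimes> b) = c [^] Suc n \<otimes> b" using cc b by (simp add: m_assoc)
  finally show ?case unfolding c_def .
qed

lemma commutator_pow_eq_one:
  assumes a: "a \<in> carrier G" and b: "b \<in> carrier G"
    and central: "a \<otimes> b \<otimes> inv a \<otimes> inv b \<in> center G" and "a [^] (n::nat) \<in> center G"
  shows "(a \<otimes> b \<otimes> inv a \<otimes> inv b) [^] n = \<one>"
proof -
  have "a [^] n \<otimes> b \<otimes> inv (a [^] n) = b"
    using center_commute[OF assms(4) b] a b by (simp add: m_assoc)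
  then have "(a \<otimes> b \<otimes> inv a \<otimes> inv b) [^] n \<otimes> b = b"
    using conj_pow_eq_commutator_pow[OF a b central] by simp
  then show ?thesis using a b by simp
qed

lemma center_subset_maximal_subgroup:
  assumes fin: "finite (carrier G)" and ZG': "center G \<subseteq> derived_set G (carrier G)"
    and K: "maximal_subgroup G K"
  shows "center G \<subseteq> K"
proof (rule ccontr)
  assume "\<not> center G \<subseteq> K"
  then obtain z where z: "z \<in> center G" "z \<notin> K" by blast
  have Ks: "subgroup K G" and max: "\<And>L. subgroup L G \<Longrightarrow> K \<subseteq> L \<Longrightarrow> L = K \<or> L = carrier G"
    using K unfolding maximal_subgroup_def by auto
  have zc: "z \<in> carrier G" using z unfolding center_def by simp
  have norm: "\<forall>y\<in>K. z \<otimes> y \<otimes> inv z \<in> K"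
    using center_commute[OF z(1)] subgroup.mem_carrier[OF Ks] zc by (simp add: m_assoc)
  have "adjoin_powers G K z = carrier G"
    using max[OF subgroup_adjoin_powers[OF fin Ks zc norm] subset_adjoin_powers(1)[OF Ks zc]]
      subset_adjoin_powers(2)[OF Ks zc] z(2) by blast
  then have "derived_set G (carrier G) \<subseteq> K"
    using commutator_mem_if_adjoin_powers_eq_carrier[OF Ks zc norm] by blast
  then show False using ZG' z by blast
qed

lemma maximal_subgroupI_by_coprime_pows:
  fixes p :: nat
  assumes K: "subgroup K G" and x: "x \<in> carrier G" "x \<notin> K" and p: "p \<noteq> 0"
    and pow: "\<And>w. w \<in> carrier G \<Longrightarrow> w [^] p \<in> K"
    and factor: "\<And>w. w \<in> carrier G \<Longrightarrow> w \<notin> K \<Longrightarrow> \<exists>u\<in>K. \<exists>j::nat. x = u \<otimes> w [^] j \<and> coprime p j"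
  shows "maximal_subgroup G K"
  unfolding maximal_subgroup_def
proof (intro conjI allI impI)
  show "subgroup K G" "K \<noteq> carrier G" using K x by auto
  fix L assume L: "subgroup L G \<and> K \<subseteq> L"
  then have Ls: "subgroup L G" by simp
  show "L = K \<or> L = carrier G"
  proof (cases "L = K")
    case False
    then obtain w0 where w0: "w0 \<in> L" "w0 \<notin> K" using L by blast
    obtain u i where "u \<in> K" "x = u \<otimes> w0 [^] (i::nat)"
      using factor[OF subgroup.mem_carrier[OF Ls w0(1)] w0(2)] by blast
    then have xL: "x \<in> L"
      using L w0(1) subgroup.m_closed[OF Ls] subgroup_pow_closed[OF Ls] by blast
    have "w \<in> L" if w: "w \<in> carrier G" for w
    proof (cases "w \<in> K")
      case False
      then obtain u' j where u': "u' \<in> K" "x = u' \<otimes> w [^] (j::nat)" "coprime p j"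
        using factor[OF w] by blast
      have "w [^] j = inv u' \<otimes> x"
        using u' w subgroup.mem_carrier[OF K] by (simp add: inv_mult_cancel_left)
      then have "w [^] j \<in> L"
        using xL u'(1) L subgroup.m_closed[OF Ls] subgroup.m_inv_closed[OF Ls] by (metis subsetD)
      moreover have "w [^] p \<in> L" using pow[OF w] L by blast
      ultimately show ?thesis using mem_subgroup_if_coprime_pows[OF Ls w u'(3) p] by blast
    qed (use L in blast)
    then show ?thesis using subgroup.subset[OF Ls] by blast
  qed simp
qed

text \<open>Take K maximal among the subgroups containing the centre but not x. As G' lies in K, every
  y outside K normalizes K, so x \<in> K y^j by maximality, with p \<not> dvd j since y^p \<in> K.\<close>

lemma ex_maximal_subgroup_avoiding:
  fixes p :: nat
  assumes fin: "finite (carrier G)" and p: "Factorial_Ring.prime p"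
    and G'Z: "derived_set G (carrier G) \<subseteq> center G"
    and powZ: "\<And>y. y \<in> carrier G \<Longrightarrow> y [^] p \<in> center G"
    and x: "x \<in> carrier G" "x \<notin> center G"
  obtains K where "maximal_subgroup G K" "x \<notin> K"
proof -
  obtain K where K: "subgroup K G" "center G \<subseteq> K \<and> x \<notin> K"
    and max: "\<And>L. subgroup L G \<Longrightarrow> center G \<subseteq> L \<and> x \<notin> L \<Longrightarrow> K \<subseteq> L \<Longrightarrow> L = K"
    by (rule ex_maximal_subgroup_with[OF fin subgroup_center,
          where P = "\<lambda>K. center G \<subseteq> K \<and> x \<notin> K", OF conjI[OF subset_refl x(2)]]) blast
  have "\<exists>u\<in>K. \<exists>j::nat. x = u \<otimes> y [^] j \<and> coprime p j" if y: "y \<in> carrier G" "y \<notin> K" for y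
  proof -
    have norm: "\<forall>k\<in>K. y \<otimes> k \<otimes> inv y \<in> K"
      using conj_mem_if_derived_set_subset[OF _ K(1) y(1)] G'Z K(2) by blast
    note S = subgroup_adjoin_powers[OF fin K(1) y(1) norm] and KS = subset_adjoin_powers[OF K(1) y(1)]
    have "x \<in> adjoin_powers G K y"
      using max[OF S _ KS(1)] KS K(2) y(2) by blast
    then obtain u j where uj: "u \<in> K" "x = u \<otimes> y [^] (j::nat)" unfolding adjoin_powers_def by blast
    have "\<not> p dvd j"
    proof
      assume "p dvd j"
      then obtain t where "j = p * t" by blast
      then have "y [^] j = (y [^] p) [^] t" using y by (simp add: nat_pow_pow)
      then have "y [^] j \<in> K" using subgroup_pow_closed[OF K(1)] powZ[OF y(1)] K(2) by auto
      then show False using uj K subgroup.m_closed[OF K(1)] by auto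
    qed
    then show ?thesis using uj prime_imp_coprime[OF p] by blast
  qed
  moreover have "y [^] p \<in> K" if "y \<in> carrier G" for y using powZ[OF that] K(2) by blast
  ultimately have "maximal_subgroup G K"
    using maximal_subgroupI_by_coprime_pows[OF K(1) x(1)] K(2) prime_gt_0_nat[OF p] by blast
  then show thesis using that K(2) by blast
qed

lemma frattini_eq_center:
  fixes p :: nat
  assumes fin: "finite (carrier G)" and p: "Factorial_Ring.prime p"
    and G'Z: "derived_set G (carrier G) = center G"
    and powZ: "\<And>y. y \<in> carrier G \<Longrightarrow> y [^] p \<in> center G"
  shows "frattini G = center G"
proof
  show "center G \<subseteq> frattini G"
    unfolding frattini_def using center_subset_maximal_subgroup[OF fin] G'Z subgroup.subset[OF subgroup_center]
    by blast
  show "frattini G \<subseteq> center G"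
  proof
    fix x assume x: "x \<in> frattini G"
    show "x \<in> center G"
    proof (rule ccontr)
      assume "x \<notin> center G"
      moreover have "x \<in> carrier G" using x unfolding frattini_def by blast
      ultimately obtain K where "maximal_subgroup G K" "x \<notin> K"
        using ex_maximal_subgroup_avoiding[OF fin p _ powZ] G'Z by blast
      then show False using x unfolding frattini_def by blast
    qed
  qed
qed

end

section \<open>Word images\<close>

definition power_word :: "nat \<Rightarrow> (nat \<times> bool) list" where
  "power_word n = replicate n (0, False)"

definition commutator_word :: "(nat \<times> bool) list" where
  "commutator_word = [(0, False), (1, False), (0, True), (1, True)]"

context group
begin

lemma word_eval_power_word: "g 0 \<in> carrier G \<Longrightarrow> word_eval G (power_word n) g = g 0 [^] n"
  unfolding power_word_def by (induction n) (simp_all add: nat_pow_Suc2[symmetric])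

lemma word_image_power_word: "word_image G 1 (power_word n) = {x [^] n | x. x \<in> carrier G}"
proof
  show "word_image G 1 (power_word n) \<subseteq> {x [^] n | x. x \<in> carrier G}"
    unfolding word_image_def using word_eval_power_word by fastforce
  show "{x [^] n | x. x \<in> carrier G} \<subseteq> word_image G 1 (power_word n)"
  proof
    fix y assume "y \<in> {x [^] n | x. x \<in> carrier G}"
    then obtain x where x: "x \<in> carrier G" "y = x [^] n" by blast
    then have "word_eval G (power_word n) (\<lambda>_. x) = y" using word_eval_power_word by simp
    then show "y \<in> word_image G 1 (power_word n)" unfolding word_image_def using x by blast
  qed
qed

lemma word_eval_commutator_word:
  "g 0 \<in> carrier G \<Longrightarrow> g 1 \<in> carrier G \<Longrightarrow>
    word_eval G commutator_word g = g 0 \<otimes> g 1 \<otimes> inv (g 0) \<otimes> inv (g 1)"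
  unfolding commutator_word_def by (simp add: m_assoc)

lemma word_image_commutator_word: "word_image G 2 commutator_word = derived_set G (carrier G)"
proof
  show "word_image G 2 commutator_word \<subseteq> derived_set G (carrier G)"
  proof
    fix y assume "y \<in> word_image G 2 commutator_word"
    then obtain g where g: "\<forall>i<2. g i \<in> carrier G" "y = word_eval G commutator_word g"
      unfolding word_image_def by blast
    then have "g 0 \<in> carrier G" "g 1 \<in> carrier G" by auto
    then show "y \<in> derived_set G (carrier G)" using g(2) word_eval_commutator_word by blast
  qed
  show "derived_set G (carrier G) \<subseteq> word_image G 2 commutator_word"
  proof
    fix y assume "y \<in> derived_set G (carrier G)"
    then obtain a b where ab: "a \<in> carrier G" "b \<in> carrier G" "y = a \<otimes> b \<otimes> inv a \<otimes> inv b" by blast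
    define g where "g = (\<lambda>i::nat. if i = 0 then a else b)"
    have "word_eval G commutator_word g = y" "\<forall>i<2. g i \<in> carrier G"
      using word_eval_commutator_word[of g] ab unfolding g_def by auto
    then show "y \<in> word_image G 2 commutator_word" unfolding word_image_def by blast
  qed
qed

lemma pow_image_in_word_images: "{x [^] (n::nat) | x. x \<in> carrier G} \<in> word_images G"
  unfolding word_images_def letters_below_def word_image_power_word[symmetric]
  by (intro CollectI exI[of _ 1] exI[of _ "power_word n"]) (simp add: power_word_def)

lemma derived_set_in_word_images: "derived_set G (carrier G) \<in> word_images G"
  unfolding word_images_def letters_below_def word_image_commutator_word[symmetric]
  by (intro CollectI exI[of _ 2] exI[of _ commutator_word]) (simp add: commutator_word_def)

lemma carrier_ne_one_if_not_comm: "\<not> comm_group G \<Longrightarrow> carrier G \<noteq> {\<one>}"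
  using group_comm_groupI by force

lemma order_ne_one_if_not_comm:
  assumes "\<not> comm_group G" shows "order G \<noteq> 1"
proof
  assume "order G = 1"
  then obtain x where "carrier G = {x}" unfolding order_def using card_1_singletonE by blast
  then have "carrier G = {\<one>}" using one_closed by simp
  then show False using carrier_ne_one_if_not_comm[OF assms] by contradiction
qed

lemma word_images_cases:
  assumes "word_images G = {{\<one>}, center G, carrier G}" "S \<in> word_images G"
  shows "S = {\<one>} \<or> S = center G \<or> S = carrier G"
  using assms by simp

lemma prime_pow_in_center:
  assumes fin: "finite (carrier G)" and W: "word_images G = {{\<one>}, center G, carrier G}"
    and q: "Factorial_Ring.prime q" "q dvd order G" and x: "x \<in> carrier G"
  shows "x [^] q \<in> center G"
proof -
  let ?S = "{x [^] q | x. x \<in> carrier G}"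
  have xS: "x [^] q \<in> ?S" using x by blast
  have "?S = {\<one>} \<or> ?S = center G"
    using word_images_cases[OF W pow_image_in_word_images] pow_image_ne_carrier[OF fin q] by blast
  then show ?thesis
  proof
    assume "?S = {\<one>}"
    then have "x [^] q = \<one>" using xS by blast
    then show ?thesis using subgroup.one_closed[OF subgroup_center] by simp
  qed (use xS in blast)
qed

lemma order_eq_prime_power:
  assumes fin: "finite (carrier G)" and nc: "\<not> comm_group G"
    and W: "word_images G = {{\<one>}, center G, carrier G}"
    and p: "Factorial_Ring.prime p" "p dvd order G"
  shows "\<exists>n. order G = p ^ n"
proof (rule prime_power_if_unique_prime_divisor[OF _ p(1)])
  show "order G \<noteq> 0" using order_gt_0_iff_finite fin by simp
  fix q :: nat assume q: "Factorial_Ring.prime q" "q dvd order G"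
  show "q = p"
  proof (rule ccontr)
    assume "q \<noteq> p"
    have "comm_group G"
    proof (rule comm_group_if_coprime_pows_central)
      show "coprime p q" using primes_coprime[OF p(1) q(1)] \<open>q \<noteq> p\<close> by simp
      show "p \<noteq> 0" using p(1) by simp
      show "x [^] p \<in> center G" if "x \<in> carrier G" for x using prime_pow_in_center[OF fin W p that] .
      show "x [^] q \<in> center G" if "x \<in> carrier G" for x using prime_pow_in_center[OF fin W q that] .
    qed
    then show False using nc by simp
  qed
qed

lemma derived_set_eq_center:
  assumes fin: "finite (carrier G)" and nc: "\<not> comm_group G"
    and W: "word_images G = {{\<one>}, center G, carrier G}"
    and p: "Factorial_Ring.prime p" and cardG: "order G = p ^ n"
  shows "derived_set G (carrier G) = center G"
proof -
  obtain M where M: "subgroup M G" "M \<noteq> carrier G"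
    and comm: "\<And>a b. a \<in> carrier G \<Longrightarrow> b \<in> carrier G \<Longrightarrow> a \<otimes> b \<otimes> inv a \<otimes> inv b \<in> M"
    by (rule p_group_commutators_in_proper_subgroup[OF fin p cardG carrier_ne_one_if_not_comm[OF nc]]) blast
  have "derived_set G (carrier G) \<subseteq> M" using comm by blast
  then have "derived_set G (carrier G) \<noteq> carrier G" using subgroup.subset[OF M(1)] M(2) by blast
  moreover have "derived_set G (carrier G) \<noteq> {\<one>}"
  proof
    assume "derived_set G (carrier G) = {\<one>}"
    then have "a \<otimes> b = b \<otimes> a" if "a \<in> carrier G" "b \<in> carrier G" for a b
      using commutator_eq_one_iff[OF that] that by blast
    then show False using nc group_comm_groupI by blast
  qed
  ultimately show ?thesis using word_images_cases[OF W derived_set_in_word_images] by blast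
qed

lemma derived_eq_center:
  assumes "derived_set G (carrier G) = center G" shows "derived G (carrier G) = center G"
proof -
  have "center G = generate G (center G)" by (rule generateI) (simp_all add: subgroup_center)
  then show ?thesis unfolding derived_def assms by simp
qed

lemma elementary_abelian_center:
  fixes p :: nat
  assumes G'Z: "derived_set G (carrier G) = center G"
    and powZ: "\<And>y. y \<in> carrier G \<Longrightarrow> y [^] p \<in> center G"
  shows "elementary_abelian_p G p (center G)"
  unfolding elementary_abelian_p_def
proof (intro conjI ballI)
  show "subgroup (center G) G" by (rule subgroup_center)
  interpret Z: group "G\<lparr>carrier := center G\<rparr>" by (rule subgroup_imp_group[OF subgroup_center])
  show "comm_group (G\<lparr>carrier := center G\<rparr>)"
  proof (rule Z.group_comm_groupI)
    fix x y assume "x \<in> carrier (G\<lparr>carrier := center G\<rparr>)" "y \<in> carrier (G\<lparr>carrier := center G\<rparr>)"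
    then show "x \<otimes>\<^bsub>G\<lparr>carrier := center G\<rparr>\<^esub> y = y \<otimes>\<^bsub>G\<lparr>carrier := center G\<rparr>\<^esub> x"
      using center_commute subgroup.mem_carrier[OF subgroup_center] by simp
  qed
  fix z assume z: "z \<in> center G"
  then obtain a b where ab: "a \<in> carrier G" "b \<in> carrier G" "z = a \<otimes> b \<otimes> inv a \<otimes> inv b"
    using G'Z by blast
  show "z [^] p = \<one>"
    using commutator_pow_eq_one[OF ab(1,2) _ powZ[OF ab(1)]] z ab(3) by simp
qed

end

theorem theorem5p2:
  fixes G :: "('a, 'b) monoid_scheme"
  assumes "group G"
    and "finite (carrier G)"
    and "\<not> comm_group G"
    and "word_images G = {{\<one>\<^bsub>G\<^esub>}, center G, carrier G}"
  shows "\<exists>p. special_p_group G p"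
proof -
  interpret group G by fact
  obtain p :: nat where p: "Factorial_Ring.prime p" "p dvd order G"
    using prime_factor_nat order_ne_one_if_not_comm[OF assms(3)] by blast
  obtain n where n: "order G = p ^ n" using order_eq_prime_power[OF assms(2-4) p] by blast
  have G'Z: "derived_set G (carrier G) = center G"
    using derived_set_eq_center[OF assms(2-4) p(1) n] .
  have powZ: "\<And>y. y \<in> carrier G \<Longrightarrow> y [^]\<^bsub>G\<^esub> p \<in> center G"
    using prime_pow_in_center[OF assms(2,4) p] .
  have "special_p_group G p"
    unfolding special_p_group_def p_group_def
    using p(1) n assms(1,2) derived_eq_center[OF G'Z] frattini_eq_center[OF assms(2) p(1) G'Z powZ]
      elementary_abelian_center[OF G'Z powZ] unfolding order_def by blast
  then show ?thesis by blast
qed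

end
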